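(* For $\alpha\in(0,\pi)$ let $\mathfrak{K}_\alpha(\tau):=\big(4\sin^2(\alpha)+(\sqrt\tau-1/\sqrt\tau)^2\big)^{-1/4}$, $\tau>0$, and let $\widehat{\mathfrak{K}}_\alpha$ denote the analytic extension to $\mathbb{C}\setminus\big((1/4+\mathbb{N})\cup(-1/4-\mathbb{N})\big)$ of its Mellin transform $\lambda\mapsto\int_0^\infty\mathfrak{K}_\alpha(r)r^{-\lambda}\,dr/r$, with $\widehat{\mathfrak{K}}_{\pi/2}-\widehat{\mathfrak{K}}_\alpha$ understood as the Mellin transform of $\mathfrak{K}_{\pi/2}-\mathfrak{K}_\alpha$, analytic in $|\mathrm{Re}\,\lambda|<5/4$. Then for all $\alpha\in(0,\pi)$, $$\sup_{\lambda\in\pm1/4+\imath\mathbb{R}}|\widehat{\mathfrak{K}}_\alpha(\lambda)-\widehat{\mathfrak{K}}_{\pi/2}(\lambda)|<+\infty\qquad\text{and}\qquad\sup_{\lambda\in\imath\mathbb{R}}|\widehat{\mathfrak{K}}_\alpha(\lambda)|<+\infty.$$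
   Context: $\mathbb{N}=\{0,1,2,\dots\}$. *)

theory Defs
  imports "HOL-Analysis.Analysis"
begin

definition Kfrak :: "real \<Rightarrow> real \<Rightarrow> real" where
  "Kfrak \<alpha> \<tau> = (4 * (sin \<alpha>)\<^sup>2 + (sqrt \<tau> - 1 / sqrt \<tau>)\<^sup>2) powr (-1/4)"

definition mellin_integrand :: "(real \<Rightarrow> real) \<Rightarrow> complex \<Rightarrow> real \<Rightarrow> complex" where
  "mellin_integrand f z r = complex_of_real (f r) * (complex_of_real r) powr (- z) / complex_of_real r"

definition mellin_integrable :: "(real \<Rightarrow> real) \<Rightarrow> complex \<Rightarrow> bool" where
  "mellin_integrable f z \<longleftrightarrow> set_integrable lborel {0<..} (mellin_integrand f z)"

definition mellin :: "(real \<Rightarrow> real) \<Rightarrow> complex \<Rightarrow> complex" where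
  "mellin f z = (LINT r:{0<..}|lborel. mellin_integrand f z r)"

end

theory Submission
  imports Defs
begin

text \<open>
  Write \<open>w(r) = (sqrt r - 1/sqrt r)^2 = r + 1/r - 2\<close> and \<open>s = sin^2 \<alpha> \<in> (0,1]\<close>. Since
  \<open>w(r) + 4\<close> dominates both \<open>r\<close> and \<open>1/r\<close>, the base \<open>4s + w(r)\<close> of
  \<open>K_\<alpha>(r) = (4s + w(r))^(-1/4)\<close> is at least \<open>s r\<close> and \<open>s/r\<close>. Hence \<open>K_\<alpha>\<close> is
  \<open>O(r^(1/4))\<close> at 0 and \<open>O(r^(-1/4))\<close> at infinity, and the mean value theorem for
  \<open>t^(-1/4)\<close> makes \<open>K_(\<pi>/2) - K_\<alpha>\<close> of order \<open>r^(5/4)\<close> at 0 and \<open>r^(-5/4)\<close> at infinity.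
  A function that is \<open>O(r^a)\<close> at 0 and \<open>O(r^b)\<close> at infinity has, on every closed strip
  \<open>b < \<sigma>\<^sub>0 \<le> Re z \<le> \<sigma>\<^sub>1 < a\<close>, a Mellin integrand dominated by one integrable function
  independent of \<open>z\<close>, which bounds the transform on the whole strip.
\<close>

lemma set_integrable_powr_0_1:
  assumes "p > (-1::real)"
  shows "set_integrable lborel {0<..1} (\<lambda>x::real. x powr p)"
proof -
  have "(\<lambda>x. x powr p) absolutely_integrable_on {0<..1}"
    using assms by (intro nonnegative_absolutely_integrable_1 integrable_on_powr_from_0') auto
  then show ?thesis
    unfolding set_integrable_def by (subst (asm) integrable_completion) auto
qed

lemma set_integrable_powr_1_infinity:
  assumes "p < (-1::real)"
  shows "set_integrable lborel {1<..} (\<lambda>x::real. x powr p)"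
proof -
  have "(\<lambda>x. x powr p) integrable_on {1..}"
    using has_integral_powr_to_inf[OF assms, of 1] by (auto simp: integrable_on_def)
  then have "(\<lambda>x. x powr p) absolutely_integrable_on {1..}"
    by (intro nonnegative_absolutely_integrable_1) auto
  then have "set_integrable lborel {1..} (\<lambda>x::real. x powr p)"
    unfolding set_integrable_def by (subst (asm) integrable_completion) auto
  then show ?thesis
    by (rule set_integrable_subset) auto
qed

lemma set_integrable_powr_piecewise:
  assumes "p > -1" "q < (-1::real)"
  shows "set_integrable lborel {0<..} (\<lambda>r::real. if r \<le> 1 then r powr p else r powr q)"
proof -
  have "set_integrable lborel {0<..1} (\<lambda>r::real. if r \<le> 1 then r powr p else r powr q)"
    using set_integrable_powr_0_1[OF assms(1)]
    by (rule iffD1[OF set_integrable_cong, rotated -1]) auto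
  moreover have "set_integrable lborel {1<..} (\<lambda>r::real. if r \<le> 1 then r powr p else r powr q)"
    using set_integrable_powr_1_infinity[OF assms(2)]
    by (rule iffD1[OF set_integrable_cong, rotated -1]) auto
  moreover have "{0<..} = {0<..1} \<union> {1::real<..}"
    by auto
  ultimately show ?thesis
    using set_integrable_Un by fastforce
qed

lemma norm_mellin_integrand:
  assumes "0 < r"
  shows "norm (mellin_integrand f z r) = \<bar>f r\<bar> * r powr (- Re z - 1)"
  using assms
  by (simp add: mellin_integrand_def norm_mult norm_divide norm_powr_real_powr powr_diff)

lemma set_borel_measurable_mellin_integrand:
  assumes [measurable]: "f \<in> borel_measurable lborel"
  shows "set_borel_measurable lborel {0<..} (mellin_integrand f z)"
proof -
  have "(\<lambda>x. indicator {0<..} x *\<^sub>R mellin_integrand f z x) =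
        (\<lambda>x. indicator {0<..} x *\<^sub>R
               (complex_of_real (f x) * exp (- z * complex_of_real (ln x)) / complex_of_real x))"
    by (rule ext) (auto simp: indicator_def mellin_integrand_def powr_def Ln_of_real)
  moreover have "\<dots> \<in> borel_measurable lborel"
    by measurable
  ultimately show ?thesis
    unfolding set_borel_measurable_def by simp
qed

lemma mellin_integrable_norm_le:
  assumes [measurable]: "f \<in> borel_measurable lborel"
    and g: "set_integrable lborel {0<..} g"
    and le: "\<And>r. 0 < r \<Longrightarrow> \<bar>f r\<bar> * r powr (- Re z - 1) \<le> g r"
  shows "mellin_integrable f z" and "cmod (mellin f z) \<le> (LINT r:{0<..}|lborel. g r)"
proof -
  have norm_le: "norm (mellin_integrand f z r) \<le> g r" if "r \<in> {0<..}" for r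
    using that le by (simp add: norm_mellin_integrand)
  have integrable: "set_integrable lborel {0<..} (mellin_integrand f z)"
    using norm_le
    by (intro set_integrable_bound[OF g set_borel_measurable_mellin_integrand AE_I2])
       (auto intro: order_trans abs_ge_self)
  then show "mellin_integrable f z"
    unfolding mellin_integrable_def .
  have "cmod (mellin f z) \<le> (LINT r:{0<..}|lborel. norm (mellin_integrand f z r))"
    unfolding mellin_def by (rule set_integral_norm_bound[OF integrable])
  also have "\<dots> \<le> (LINT r:{0<..}|lborel. g r)"
    using norm_le by (intro set_integral_mono set_integrable_norm integrable g)
  finally show "cmod (mellin f z) \<le> (LINT r:{0<..}|lborel. g r)" .
qed

lemma mellin_bounded_on_strip:
  fixes f :: "real \<Rightarrow> real"
  assumes [measurable]: "f \<in> borel_measurable lborel"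
    and "b < \<sigma>\<^sub>0" "\<sigma>\<^sub>1 < a"
    and near_0: "\<And>r. 0 < r \<Longrightarrow> r \<le> 1 \<Longrightarrow> \<bar>f r\<bar> \<le> C * r powr a"
    and near_infinity: "\<And>r. 1 < r \<Longrightarrow> \<bar>f r\<bar> \<le> C * r powr b"
  obtains B where "\<And>z. \<sigma>\<^sub>0 \<le> Re z \<Longrightarrow> Re z \<le> \<sigma>\<^sub>1 \<Longrightarrow> mellin_integrable f z"
    and "\<And>z. \<sigma>\<^sub>0 \<le> Re z \<Longrightarrow> Re z \<le> \<sigma>\<^sub>1 \<Longrightarrow> cmod (mellin f z) \<le> B"
proof -
  define g where "g r = C * (if r \<le> 1 then r powr (a - \<sigma>\<^sub>1 - 1) else r powr (b - \<sigma>\<^sub>0 - 1))"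
    for r :: real
  have g: "set_integrable lborel {0<..} g"
    unfolding g_def using assms
    by (intro set_integrable_mult_right set_integrable_powr_piecewise) auto
  have dominated: "\<bar>f r\<bar> * r powr (- Re z - 1) \<le> g r"
    if "\<sigma>\<^sub>0 \<le> Re z" "Re z \<le> \<sigma>\<^sub>1" "0 < r" for z r
  proof (cases "r \<le> 1")
    case True
    have "\<bar>f r\<bar> * r powr (- Re z - 1) \<le> (C * r powr a) * r powr (- \<sigma>\<^sub>1 - 1)"
      using that True near_0[of r]
      by (intro mult_mono powr_mono') (auto intro: order_trans[OF abs_ge_zero])
    also have "\<dots> = g r"
      using True by (simp add: g_def mult.assoc flip: powr_add) (simp add: algebra_simps)
    finally show ?thesis .
  next
    case False
    have "\<bar>f r\<bar> * r powr (- Re z - 1) \<le> (C * r powr b) * r powr (- \<sigma>\<^sub>0 - 1)"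
      using that False near_infinity[of r]
      by (intro mult_mono powr_mono) (auto intro: order_trans[OF abs_ge_zero])
    also have "\<dots> = g r"
      using False by (simp add: g_def mult.assoc flip: powr_add) (simp add: algebra_simps)
    finally show ?thesis .
  qed
  show ?thesis
  proof
    fix z :: complex
    assume "\<sigma>\<^sub>0 \<le> Re z" "Re z \<le> \<sigma>\<^sub>1"
    note dominated_z = dominated[OF this]
    show "mellin_integrable f z"
      by (rule mellin_integrable_norm_le(1)[OF _ g dominated_z]) simp_all
    show "cmod (mellin f z) \<le> (LINT r:{0<..}|lborel. g r)"
      by (rule mellin_integrable_norm_le(2)[OF _ g dominated_z]) simp_all
  qed
qed

lemma powr_neg_diff_le:
  fixes u v p :: real
  assumes "0 < v" "v \<le> u" "0 \<le> p"
  shows "v powr (- p) - u powr (- p) \<le> p * (u - v) * v powr (- p - 1)"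
proof (cases "v = u")
  case False
  then have "v < u"
    using assms by simp
  have "\<exists>t. v < t \<and> t < u \<and> u powr (- p) - v powr (- p) = (u - v) * (- p * t powr (- p - 1))"
  proof (rule MVT2[OF \<open>v < u\<close>])
    fix x
    assume "v \<le> x" "x \<le> u"
    then show "((\<lambda>x. x powr (- p)) has_real_derivative - p * x powr (- p - 1)) (at x)"
      using \<open>0 < v\<close> by (auto intro!: derivative_eq_intros)
  qed
  then obtain t where t: "v < t" "t < u"
    and mvt: "u powr (- p) - v powr (- p) = (u - v) * (- p * t powr (- p - 1))"
    by blast
  have "t powr (- p - 1) \<le> v powr (- p - 1)"
    using t assms by (intro powr_mono2') auto
  then have "p * (u - v) * t powr (- p - 1) \<le> p * (u - v) * v powr (- p - 1)"
    using \<open>v < u\<close> assms by (intro mult_left_mono) auto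
  with mvt show ?thesis
    by (simp add: algebra_simps)
qed simp

lemma sqrt_diff_inverse_sqrt_squared: "0 < r \<Longrightarrow> (sqrt r - 1 / sqrt r)\<^sup>2 = r + 1 / r - 2"
  by (simp add: power2_eq_square field_simps real_sqrt_mult[symmetric])

lemma Kfrak_base_ge:
  fixes s r e :: real
  assumes "0 < s" "s \<le> 1" "0 < r" "e = 1 \<or> e = -1"
  shows "s * r powr e \<le> 4 * s + (sqrt r - 1 / sqrt r)\<^sup>2"
proof -
  define w where "w = (sqrt r - 1 / sqrt r)\<^sup>2"
  have "r powr e \<le> w + 4"
    using assms by (auto simp: w_def sqrt_diff_inverse_sqrt_squared powr_neg_one)
  then have "s * r powr e \<le> s * (w + 4)"
    using assms by (intro mult_left_mono) auto
  also have "\<dots> \<le> 4 * s + w"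
    using assms by (simp add: algebra_simps w_def mult_left_le_one_le)
  finally show ?thesis
    unfolding w_def .
qed

lemma Kfrak_le:
  assumes "sin \<alpha> \<noteq> 0" "0 < r" "e = 1 \<or> e = -1"
  shows "Kfrak \<alpha> r \<le> (sin \<alpha>)\<^sup>2 powr (-1/4) * r powr (- e / 4)"
proof -
  have s: "0 < (sin \<alpha>)\<^sup>2" "(sin \<alpha>)\<^sup>2 \<le> 1"
    using assms by (auto simp: abs_square_le_1)
  have "Kfrak \<alpha> r \<le> ((sin \<alpha>)\<^sup>2 * r powr e) powr (-1/4)"
    unfolding Kfrak_def using s assms by (intro powr_mono2' Kfrak_base_ge) auto
  also have "\<dots> = (sin \<alpha>)\<^sup>2 powr (-1/4) * r powr (- e / 4)"
    using s assms by (simp add: powr_mult powr_powr)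
  finally show ?thesis .
qed

lemma Kfrak_diff_le:
  assumes "sin \<alpha> \<noteq> 0" "0 < r" "e = 1 \<or> e = -1"
  shows "\<bar>Kfrak (pi/2) r - Kfrak \<alpha> r\<bar> \<le> (sin \<alpha>)\<^sup>2 powr (-5/4) * r powr (- e * 5 / 4)"
proof -
  define s where "s = (sin \<alpha>)\<^sup>2"
  define w where "w = (sqrt r - 1 / sqrt r)\<^sup>2"
  have s: "0 < s" "s \<le> 1"
    using assms by (auto simp: s_def abs_square_le_1)
  have w: "0 \<le> w"
    by (simp add: w_def)
  have Kfrak_eq: "Kfrak \<alpha> r = (4 * s + w) powr (-1/4)" "Kfrak (pi/2) r = (4 + w) powr (-1/4)"
    by (simp_all add: Kfrak_def s_def w_def)
  have "(4 + w) powr (-1/4) \<le> (4 * s + w) powr (-1/4)"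
    using s w by (intro powr_mono2') auto
  then have "\<bar>Kfrak (pi/2) r - Kfrak \<alpha> r\<bar> = (4 * s + w) powr (-1/4) - (4 + w) powr (-1/4)"
    by (simp add: Kfrak_eq)
  also have "\<dots> \<le> 1/4 * ((4 + w) - (4 * s + w)) * (4 * s + w) powr (-5/4)"
    using powr_neg_diff_le[of "4 * s + w" "4 + w" "1/4"] s w by simp
  also have "\<dots> \<le> (4 * s + w) powr (-5/4)"
    using s by (intro mult_left_le_one_le) auto
  also have "\<dots> \<le> (s * r powr e) powr (-5/4)"
    using s assms unfolding w_def by (intro powr_mono2' Kfrak_base_ge) auto
  also have "\<dots> = s powr (-5/4) * r powr (- e * 5 / 4)"
    using s assms by (simp add: powr_mult powr_powr)
  finally show ?thesis
    unfolding s_def .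
qed

lemma borel_measurable_Kfrak [measurable]: "Kfrak \<alpha> \<in> borel_measurable lborel"
  unfolding Kfrak_def by measurable

theorem corollary4:
  fixes \<alpha> :: real
  assumes "0 < \<alpha>" and "\<alpha> < pi"
  shows "(\<forall>z. (Re z = 1/4 \<or> Re z = -1/4) \<longrightarrow>
            mellin_integrable (\<lambda>r. Kfrak (pi/2) r - Kfrak \<alpha> r) z)
       \<and> bdd_above ((\<lambda>z. cmod (mellin (\<lambda>r. Kfrak (pi/2) r - Kfrak \<alpha> r) z))
                     ` {z. Re z = 1/4 \<or> Re z = -1/4})
       \<and> (\<forall>z. Re z = 0 \<longrightarrow> mellin_integrable (Kfrak \<alpha>) z)
       \<and> bdd_above ((\<lambda>z. cmod (mellin (Kfrak \<alpha>) z)) ` {z. Re z = 0})"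
proof -
  have sin: "sin \<alpha> \<noteq> 0"
    using assms sin_gt_zero by force
  define D where "D = (\<lambda>r. Kfrak (pi/2) r - Kfrak \<alpha> r)"
  obtain B\<^sub>D where "\<And>z. -1/4 \<le> Re z \<Longrightarrow> Re z \<le> 1/4 \<Longrightarrow> mellin_integrable D z"
    and "\<And>z. -1/4 \<le> Re z \<Longrightarrow> Re z \<le> 1/4 \<Longrightarrow> cmod (mellin D z) \<le> B\<^sub>D"
  proof (rule mellin_bounded_on_strip[of D "-5/4" "-1/4" "1/4" "5/4" "(sin \<alpha>)\<^sup>2 powr (-5/4)"])
    show "\<bar>D r\<bar> \<le> (sin \<alpha>)\<^sup>2 powr (-5/4) * r powr (5/4)" if "0 < r" "r \<le> 1" for r
      using Kfrak_diff_le[OF sin, of r "-1"] that by (simp add: D_def)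
    show "\<bar>D r\<bar> \<le> (sin \<alpha>)\<^sup>2 powr (-5/4) * r powr (-5/4)" if "1 < r" for r
      using Kfrak_diff_le[OF sin, of r 1] that by (simp add: D_def)
  qed (auto simp: D_def)
  moreover obtain B\<^sub>K where "\<And>z. Re z = 0 \<Longrightarrow> mellin_integrable (Kfrak \<alpha>) z"
    and "\<And>z. Re z = 0 \<Longrightarrow> cmod (mellin (Kfrak \<alpha>) z) \<le> B\<^sub>K"
  proof (rule mellin_bounded_on_strip[of "Kfrak \<alpha>" "-1/4" 0 0 "1/4" "(sin \<alpha>)\<^sup>2 powr (-1/4)"])
    show "\<bar>Kfrak \<alpha> r\<bar> \<le> (sin \<alpha>)\<^sup>2 powr (-1/4) * r powr (1/4)" if "0 < r" "r \<le> 1" for r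
      using Kfrak_le[OF sin, of r "-1"] that by (simp add: Kfrak_def)
    show "\<bar>Kfrak \<alpha> r\<bar> \<le> (sin \<alpha>)\<^sup>2 powr (-1/4) * r powr (-1/4)" if "1 < r" for r
      using Kfrak_le[OF sin, of r 1] that by (simp add: Kfrak_def)
  qed auto
  ultimately show ?thesis
    unfolding D_def[symmetric] by (intro conjI bdd_aboveI) force+
qed

end
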